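(* Let $n\ge2$ and let $F:(0,\pi)\to(0,\infty)$ be strictly decreasing. Let $x_1,\dots,x_n$ be distinct points on the unit circle $S^1$, listed in counterclockwise cyclic order, and suppose every particle is in tangential equilibrium under the force law described in the context. Then the arc distance $d(x_i,x_{(i \bmod n)+1})$ between cyclically consecutive particles is the same for all $i=1,\dots,n$.
   Context: For $p,q\in S^1$ let $d(p,q)\in[0,\pi]$ be the geodesic (arc-length) distance. A particle at $q$ exerts on a particle at $p\ne q$ a force tangent to $S^1$ at $p$ of magnitude $F(d(p,q))$, directed away from $q$ along the shorter arc from $q$ to $p$, if $d(p,q)<\pi$; an antipodal particle ($d(p,q)=\pi$) exerts no tangential force. The particle at $x_i$ is in equilibrium if the sum of the (signed, tangential) forces exerted on it by all the other particles $x_j$, $j\ne i$, is zero, i.e. the total force from particles in the open counterclockwise half-circle from $x_i$ equals the total force from particles in the open clockwise half-circle from $x_i$. *)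

theory Defs
  imports Complex_Main
begin

text \<open>Points of the unit circle S^1 are represented by angles (real numbers,
  taken modulo 2 pi); the angle t stands for the point (cos t, sin t).\<close>

definition ccw_angle :: "real \<Rightarrow> real \<Rightarrow> real" where
  "ccw_angle a b = (b - a) - 2 * pi * of_int \<lfloor>(b - a) / (2 * pi)\<rfloor>"

definition arc_dist :: "real \<Rightarrow> real \<Rightarrow> real" where
  "arc_dist a b = min (ccw_angle a b) (2 * pi - ccw_angle a b)"

text \<open>Signed tangential force (positive = counterclockwise) exerted by a particle
  at q on a particle at p: magnitude F(d(p,q)), directed away from q along the
  shorter arc; zero if p and q are antipodal (or equal).\<close>
definition tforce :: "(real \<Rightarrow> real) \<Rightarrow> real \<Rightarrow> real \<Rightarrow> real" where
  "tforce F p q =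
     (if 0 < ccw_angle p q \<and> ccw_angle p q < pi then - F (arc_dist p q)
      else if pi < ccw_angle p q then F (arc_dist p q)
      else 0)"

definition in_equilibrium :: "(real \<Rightarrow> real) \<Rightarrow> nat \<Rightarrow> (nat \<Rightarrow> real) \<Rightarrow> nat \<Rightarrow> bool" where
  "in_equilibrium F n x i \<longleftrightarrow> (\<Sum>j\<in>{1..n} - {i}. tforce F (x i) (x j)) = 0"

end

theory Submission
  imports Defs
begin

text \<open>Regard the force on a particle as a function of the counterclockwise angle
  to the other particle; monotonicity of F makes this function strictly increasing on
  (0, 2 pi). Let x_m be a particle whose gap to its successor x_m' is smallest. Pair
  each other particle x_j with its successor x_j'. The angle from x_m' to x_j' exceeds
  the angle from x_m to x_j by gap j - gap m \<ge> 0, so every term in the equilibrium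
  sum at x_m' dominates the corresponding term at x_m. Both sums vanish, so all terms
  agree and all gaps equal the minimal one.\<close>

lemma strict_mono_on_atLeastAtMostI:
  fixes f :: "nat \<Rightarrow> 'a::order"
  assumes step: "\<And>i. a \<le> i \<Longrightarrow> i < b \<Longrightarrow> f i < f (Suc i)"
  shows "strict_mono_on {a..b} f"
proof (rule strict_mono_onI)
  fix i j assume "i \<in> {a..b}" "j \<in> {a..b}" "i < j"
  then have "Suc i \<le> j" "j \<le> b" "a \<le> i" by auto
  then show "f i < f j"
  proof (induction j rule: dec_induct)
    case base
    then show ?case using step by simp
  next
    case (step k)
    then have "f k < f (Suc k)" using assms by simp
    with step show ?case by simp
  qed
qed

lemma ccw_angle_eq_frac: "ccw_angle a b = 2 * pi * frac ((b - a) / (2 * pi))"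
  by (simp add: ccw_angle_def frac_def field_simps)

lemma ccw_angle_bounds: "0 \<le> ccw_angle a b \<and> ccw_angle a b < 2 * pi"
  using frac_ge_0 frac_lt_1 by (simp add: ccw_angle_eq_frac)

lemma ccw_angle_eq_diff:
  assumes "a \<le> b" "b < a + 2 * pi"
  shows "ccw_angle a b = b - a"
proof -
  have "\<lfloor>(b - a) / (2 * pi)\<rfloor> = 0"
    using assms by (simp add: floor_eq_iff field_simps)
  then show ?thesis by (simp add: ccw_angle_def)
qed

lemma ccw_angle_eq_diff_add:
  assumes "b < a" "a \<le> b + 2 * pi"
  shows "ccw_angle a b = b - a + 2 * pi"
proof -
  have "\<lfloor>(b - a) / (2 * pi)\<rfloor> = -1"
    using assms by (simp add: floor_eq_iff field_simps)
  then show ?thesis by (simp add: ccw_angle_def)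
qed

lemma cyclic_succ_wrap_count:
  fixes i j n :: nat
  assumes "i \<in> {1..n}" "j \<in> {1..n}" "i \<noteq> j"
  shows "of_bool (j mod n + 1 < i mod n + 1) + of_bool (i mod n + 1 < i)
       = (of_bool (j < i) + of_bool (j mod n + 1 < j) :: 'a::semiring_1)"
  using assms by (cases "i = n"; cases "j = n") auto

lemma cyclic_succ_eq:
  fixes j n :: nat
  assumes "1 \<le> j" "j \<le> n"
  shows "j mod n + 1 = (if j = n then 1 else j + 1)"
  using assms by (auto simp: le_less)

lemma bij_betw_cyclic_succ: "bij_betw (\<lambda>j::nat. j mod n + 1) {1..n} {1..n}"
proof -
  have "bij_betw (\<lambda>j. if j = n then 1 else j + 1) {1..n} {1..n}"
    by (rule bij_betw_byWitness[where f' = "\<lambda>k. if k = 1 then n else k - 1"]) auto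
  then show ?thesis
    by (rule bij_betw_cong[THEN iffD2, rotated]) (simp add: cyclic_succ_eq)
qed

lemma cyclic_succ_in: "j \<in> {1..n} \<Longrightarrow> j mod n + 1 \<in> {1..(n::nat)}"
  by (rule bij_betw_apply[OF bij_betw_cyclic_succ])

lemma cyclic_succ_inj: "i \<in> {1..n} \<Longrightarrow> j \<in> {1..n} \<Longrightarrow> i mod n + 1 = j mod n + 1 \<Longrightarrow> i = (j::nat)"
  by (rule inj_onD[OF bij_betw_imp_inj_on[OF bij_betw_cyclic_succ]])

definition ccw_force :: "(real \<Rightarrow> real) \<Rightarrow> real \<Rightarrow> real" where
  "ccw_force F t = (if t < pi then - F t else if pi < t then F (2 * pi - t) else 0)"

lemma tforce_eq_ccw_force:
  assumes "0 < ccw_angle p q"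
  shows "tforce F p q = ccw_force F (ccw_angle p q)"
  using assms ccw_angle_bounds[of p q]
  by (auto simp: tforce_def ccw_force_def arc_dist_def min_def)

lemma ccw_force_strict_mono:
  assumes F_pos: "\<And>t. 0 < t \<Longrightarrow> t < pi \<Longrightarrow> 0 < F t"
    and F_decr: "\<And>s t. 0 < s \<Longrightarrow> s < t \<Longrightarrow> t < pi \<Longrightarrow> F t < F s"
  shows "strict_mono_on {0<..<2 * pi} (ccw_force F)"
proof (rule strict_mono_onI)
  fix a b :: real assume "a \<in> {0<..<2 * pi}" "b \<in> {0<..<2 * pi}" "a < b"
  then have ab: "0 < a" "a < b" "b < 2 * pi" by auto
  consider "b < pi" | "a < pi" "pi \<le> b" | "a = pi" | "pi < a" by linarith
  then show "ccw_force F a < ccw_force F b"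
  proof cases
    case 1
    then show ?thesis using ab F_decr by (simp add: ccw_force_def)
  next
    case 2
    then show ?thesis using ab F_pos[of a] F_pos[of "2 * pi - b"] by (auto simp: ccw_force_def)
  next
    case 3
    then show ?thesis using ab F_pos[of "2 * pi - b"] by (simp add: ccw_force_def)
  next
    case 4
    then show ?thesis using ab F_decr[of "2 * pi - b" "2 * pi - a"] by (simp add: ccw_force_def)
  qed
qed

locale ccw_sorted =
  fixes n :: nat and x :: "nat \<Rightarrow> real"
  assumes sorted: "strict_mono_on {1..n} x"
    and wrap: "x n < x 1 + 2 * pi"
begin

definition gap :: "nat \<Rightarrow> real" where
  "gap j = ccw_angle (x j) (x (j mod n + 1))"

lemma ccw_angle_sorted:
  assumes "i \<in> {1..n}" "j \<in> {1..n}"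
  shows "ccw_angle (x i) (x j) = x j - x i + 2 * pi * of_bool (j < i)"
proof (cases "j < i")
  case True
  have "x 1 \<le> x j" "x i \<le> x n" "x j < x i"
    using assms True by (auto intro: strict_mono_on_leD[OF sorted] strict_mono_onD[OF sorted])
  then show ?thesis using True wrap by (simp add: ccw_angle_eq_diff_add)
next
  case False
  have "x 1 \<le> x i" "x j \<le> x n" "x i \<le> x j"
    using assms False by (auto intro: strict_mono_on_leD[OF sorted])
  then show ?thesis using False wrap by (simp add: ccw_angle_eq_diff)
qed

lemma ccw_angle_sorted_pos:
  assumes "i \<in> {1..n}" "j \<in> {1..n}" "i \<noteq> j"
  shows "0 < ccw_angle (x i) (x j)"
proof (cases "j < i")
  case True
  have "x 1 \<le> x j" "x i \<le> x n"
    using assms by (auto intro: strict_mono_on_leD[OF sorted])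
  then show ?thesis using True wrap ccw_angle_sorted[OF assms(1,2)] by simp
next
  case False
  then have "x i < x j"
    using assms by (auto intro: strict_mono_onD[OF sorted])
  then show ?thesis using False ccw_angle_sorted[OF assms(1,2)] by simp
qed

lemma ccw_angle_succ_shift:
  assumes "i \<in> {1..n}" "j \<in> {1..n}" "i \<noteq> j"
  shows "ccw_angle (x (i mod n + 1)) (x (j mod n + 1)) + gap i = ccw_angle (x i) (x j) + gap j"
proof -
  define i' where "i' = i mod n + 1"
  define j' where "j' = j mod n + 1"
  have "i' \<in> {1..n}" "j' \<in> {1..n}"
    unfolding i'_def j'_def by (intro cyclic_succ_in assms)+
  then have "ccw_angle (x i') (x j') = x j' - x i' + 2 * pi * of_bool (j' < i')"
    "ccw_angle (x i) (x i') = x i' - x i + 2 * pi * of_bool (i' < i)"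
    "ccw_angle (x j) (x j') = x j' - x j + 2 * pi * of_bool (j' < j)"
    "ccw_angle (x i) (x j) = x j - x i + 2 * pi * of_bool (j < i)"
    using assms by (simp_all add: ccw_angle_sorted)
  moreover have "2 * pi * of_bool (j' < i') + 2 * pi * of_bool (i' < i)
      = 2 * pi * of_bool (j < i) + (2 * pi * of_bool (j' < j) :: real)"
    using cyclic_succ_wrap_count[OF assms, where 'a = real]
    unfolding i'_def j'_def by (metis distrib_left)
  ultimately show ?thesis
    unfolding gap_def i'_def[symmetric] j'_def[symmetric] by linarith
qed

lemma in_equilibrium_iff:
  assumes "i \<in> {1..n}"
  shows "in_equilibrium F n x i \<longleftrightarrow> (\<Sum>j\<in>{1..n} - {i}. ccw_force F (ccw_angle (x i) (x j))) = 0"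
proof -
  have "(\<Sum>j\<in>{1..n} - {i}. tforce F (x i) (x j))
      = (\<Sum>j\<in>{1..n} - {i}. ccw_force F (ccw_angle (x i) (x j)))"
    using assms by (intro sum.cong refl tforce_eq_ccw_force ccw_angle_sorted_pos) auto
  then show ?thesis
    unfolding in_equilibrium_def by simp
qed

lemma in_equilibrium_succ_iff:
  assumes "m \<in> {1..n}"
  shows "in_equilibrium F n x (m mod n + 1) \<longleftrightarrow>
    (\<Sum>j\<in>{1..n} - {m}. ccw_force F (ccw_angle (x (m mod n + 1)) (x (j mod n + 1)))) = 0"
proof -
  have "bij_betw (\<lambda>j. j mod n + 1) ({1..n} - {m}) ({1..n} - {m mod n + 1})"
    using assms cyclic_succ_in[OF assms]
    by (intro bij_betw_DiffI bij_betw_cyclic_succ) auto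
  then have "(\<Sum>j\<in>{1..n} - {m}. ccw_force F (ccw_angle (x (m mod n + 1)) (x (j mod n + 1))))
      = (\<Sum>j\<in>{1..n} - {m mod n + 1}. ccw_force F (ccw_angle (x (m mod n + 1)) (x j)))"
    by (rule sum.reindex_bij_betw)
  then show ?thesis
    using in_equilibrium_iff[OF cyclic_succ_in[OF assms]] by simp
qed

lemma gap_eq_if_equilibrium:
  assumes F_pos: "\<And>t. 0 < t \<Longrightarrow> t < pi \<Longrightarrow> 0 < F t"
    and F_decr: "\<And>s t. 0 < s \<Longrightarrow> s < t \<Longrightarrow> t < pi \<Longrightarrow> F t < F s"
    and equil: "\<And>i. i \<in> {1..n} \<Longrightarrow> in_equilibrium F n x i"
    and "i \<in> {1..n}" "k \<in> {1..n}"
  shows "gap i = gap k"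
proof -
  define m where "m = arg_min_on gap {1..n}"
  have ne: "{1..n} \<noteq> {}"
    using assms(4) by auto
  have m: "m \<in> {1..n}"
    unfolding m_def by (rule arg_min_if_finite(1)[OF finite_atLeastAtMost ne])
  have gap_min: "gap m \<le> gap j" if "j \<in> {1..n}" for j
    unfolding m_def by (rule arg_min_least[OF finite_atLeastAtMost ne that])
  define D where "D j = ccw_angle (x m) (x j)" for j
  define C where "C j = ccw_angle (x (m mod n + 1)) (x (j mod n + 1))" for j
  let ?J = "{1..n} - {m}"
  have mono: "strict_mono_on {0<..<2 * pi} (ccw_force F)"
    using F_pos F_decr by (rule ccw_force_strict_mono)
  have D_range: "D j \<in> {0<..<2 * pi}" and C_range: "C j \<in> {0<..<2 * pi}" if j: "j \<in> ?J" for j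
  proof -
    have "j \<in> {1..n}" "j \<noteq> m" using j by auto
    moreover from this have "j mod n + 1 \<noteq> m mod n + 1"
      using cyclic_succ_inj m by blast
    ultimately have "0 < D j" "0 < C j"
      unfolding D_def C_def using m cyclic_succ_in by (simp_all add: ccw_angle_sorted_pos)
    then show "D j \<in> {0<..<2 * pi}" "C j \<in> {0<..<2 * pi}"
      unfolding D_def C_def using ccw_angle_bounds by auto
  qed
  have shift: "C j + gap m = D j + gap j" if "j \<in> ?J" for j
    unfolding C_def D_def using ccw_angle_succ_shift[of m j] that m by simp
  have force_le: "ccw_force F (D j) \<le> ccw_force F (C j)" if j: "j \<in> ?J" for j
  proof (rule strict_mono_on_leD[OF mono D_range[OF j] C_range[OF j]])
    show "D j \<le> C j" using shift[OF j] gap_min[of j] j by simp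
  qed
  have "(\<Sum>j\<in>?J. ccw_force F (D j)) = 0"
    using equil[OF m] in_equilibrium_iff[OF m] unfolding D_def by simp
  moreover have "(\<Sum>j\<in>?J. ccw_force F (C j)) = 0"
    using equil[OF cyclic_succ_in[OF m]] in_equilibrium_succ_iff[OF m] unfolding C_def by simp
  ultimately have sums_eq: "(\<Sum>j\<in>?J. ccw_force F (D j)) = (\<Sum>j\<in>?J. ccw_force F (C j))"
    by simp
  have "C j = D j" if j: "j \<in> ?J" for j
  proof -
    have "ccw_force F (D j) = ccw_force F (C j)"
      by (rule sum_mono_inv[OF sums_eq force_le j]) auto
    then show ?thesis
      using strict_mono_on_eqD[OF mono _ D_range[OF j] C_range[OF j]] by simp
  qed
  then have "gap j = gap m" if "j \<in> {1..n}" for j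
    using shift that by (cases "j = m") force+
  then show ?thesis
    using assms(4,5) by simp
qed

end

theorem mainTheorem3:
  fixes n :: nat and F :: "real \<Rightarrow> real" and x :: "nat \<Rightarrow> real"
  assumes n2: "n \<ge> 2"
    and F_pos: "\<forall>t. 0 < t \<and> t < pi \<longrightarrow> 0 < F t"
    and F_decr: "\<forall>s t. 0 < s \<and> s < t \<and> t < pi \<longrightarrow> F t < F s"
    and ccw_order: "\<forall>i. 1 \<le> i \<and> i < n \<longrightarrow> x i < x (i + 1)"
    and ccw_wrap: "x n < x 1 + 2 * pi"
    and equil: "\<forall>i\<in>{1..n}. in_equilibrium F n x i"
  shows "\<forall>i\<in>{1..n}. \<forall>k\<in>{1..n}.
           arc_dist (x i) (x (i mod n + 1)) = arc_dist (x k) (x (k mod n + 1))"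
proof -
  have "strict_mono_on {1..n} x"
    using ccw_order by (intro strict_mono_on_atLeastAtMostI) simp
  then interpret ccw_sorted n x
    using ccw_wrap by unfold_locales
  have gaps_eq: "gap i = gap k" if "i \<in> {1..n}" "k \<in> {1..n}" for i k
    using that F_pos F_decr equil by (intro gap_eq_if_equilibrium[of F]) simp_all
  show ?thesis
    unfolding arc_dist_def gap_def[symmetric] using gaps_eq by (intro ballI) metis
qed

end
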